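(* Let $\alpha\in\mathbb C$ and $n\ge 0$ an integer. The linear span of $P_{0,\alpha},P_{1,\alpha},\ldots,P_{n,\alpha}$ coincides with the linear span $\mathcal S_{n,\alpha}$ of $I,A_\alpha,A_\alpha^2,\ldots,A_\alpha^n$ (over the same scalar field). In particular every matrix in $\mathcal S_{n,\alpha}$ can be written as $\sum_{i=0}^n a_iP_{i,\alpha}=T(a)+\sum_{i=1}^n a_iH_{i,\alpha}$ with $a(z)=a_0+\sum_{i=1}^na_i(z^i+z^{-i})$, i.e. as a symmetric banded Toeplitz matrix plus a Hankel matrix.
   Context: All matrices are semi-infinite with rows and columns indexed by the positive integers; $I$ is the semi-infinite identity and $e_1$ its first column. $T(a)$ denotes the Toeplitz matrix with $(i,j)$ entry $a_{j-i}$ for $a(z)=\sum_{i\in\mathbb Z}a_iz^i$. For $v(z)=\sum_{i\ge1}v_iz^i$, $H(v)$ is the Hankel matrix with $(i,j)$ entry $v_{i+j-1}$. $A_\alpha:=T(z+z^{-1})+\alpha e_1e_1^T$. Let $\theta=\alpha^2-1$, $h_1(z)=\alpha z$, and $h_n(z)=\theta\sum_{i=1}^{n-1}\alpha^{n-i-1}z^i+\alpha z^n$ for $n\ge2$. Define $H_{n,\alpha}=H(h_n)$, $P_{0,\alpha}=I$ and $P_{n,\alpha}=T(z^n+z^{-n})+H_{n,\alpha}$ for $n\ge1$. *)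

theory Defs
  imports Complex_Main
begin

text \<open>Semi-infinite matrices. Rows/columns indexed by positive integers 1,2,...
  are represented 0-based: entry (i,j) of the paper is M (i-1) (j-1).\<close>
type_synonym cmat = "nat \<Rightarrow> nat \<Rightarrow> complex"

definition toeplitz :: "(int \<Rightarrow> complex) \<Rightarrow> cmat" where
  "toeplitz a = (\<lambda>i j. a (int j - int i))"

text \<open>Hankel matrix H(v), v(z) = sum_{i>=1} v_i z^i: 1-based (i,j) entry v_{i+j-1},
  i.e. 0-based entry v_{i+j+1}.\<close>
definition hankel :: "(nat \<Rightarrow> complex) \<Rightarrow> cmat" where
  "hankel v = (\<lambda>i j. v (i + j + 1))"

definition idm :: cmat where
  "idm = (\<lambda>i j. if i = j then 1 else 0)"

definition madd :: "cmat \<Rightarrow> cmat \<Rightarrow> cmat" where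
  "madd A B = (\<lambda>i j. A i j + B i j)"

text \<open>Matrix product of semi-infinite matrices (sums are finite for banded matrices).\<close>
definition mmul :: "cmat \<Rightarrow> cmat \<Rightarrow> cmat" where
  "mmul A B = (\<lambda>i j. (\<Sum>k. A i k * B k j))"

fun mpow :: "cmat \<Rightarrow> nat \<Rightarrow> cmat" where
  "mpow A 0 = idm"
| "mpow A (Suc k) = mmul A (mpow A k)"

definition zsym :: "nat \<Rightarrow> int \<Rightarrow> complex" where
  "zsym n = (\<lambda>k. (if k = int n then 1 else 0) + (if k = - int n then 1 else 0))"

definition A_mat :: "complex \<Rightarrow> cmat" where
  "A_mat \<alpha> = madd (toeplitz (zsym 1)) (\<lambda>i j. if i = 0 \<and> j = 0 then \<alpha> else 0)"

definition h_coef :: "nat \<Rightarrow> complex \<Rightarrow> nat \<Rightarrow> complex" where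
  "h_coef n \<alpha> = (\<lambda>i. if 1 \<le> i \<and> i < n then (\<alpha>\<^sup>2 - 1) * \<alpha> ^ (n - i - 1)
                      else if i = n then \<alpha> else 0)"

definition H_mat :: "nat \<Rightarrow> complex \<Rightarrow> cmat" where
  "H_mat n \<alpha> = hankel (h_coef n \<alpha>)"

definition P_mat :: "nat \<Rightarrow> complex \<Rightarrow> cmat" where
  "P_mat n \<alpha> = (if n = 0 then idm else madd (toeplitz (zsym n)) (H_mat n \<alpha>))"

definition span_fam :: "(nat \<Rightarrow> cmat) \<Rightarrow> nat \<Rightarrow> cmat set" where
  "span_fam M n = {(\<lambda>i j. \<Sum>k\<le>n. c k * M k i j) | c. True}"

text \<open>Laurent coefficients of a(z) = a_0 + sum_{i=1}^n a_i (z^i + z^{-i}).\<close>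
definition sym_symbol :: "nat \<Rightarrow> (nat \<Rightarrow> complex) \<Rightarrow> int \<Rightarrow> complex" where
  "sym_symbol n c = (\<lambda>k. if nat \<bar>k\<bar> \<le> n then c (nat \<bar>k\<bar>) else 0)"

end

theory Submission
  imports Defs "HOL-Library.Function_Algebras"
begin

(* Left multiplication by A_alpha acts on rows: row i > 0 of A B is B_(i-1) + B_(i+1), row 0 is
   alpha B_0 + B_1. Put Q_n = T(z^n + z^-n) + H(h_n) for every n, so Q_0 = 2I and Q_n = P_n for
   n >= 1. For m >= 1 the coefficient of z^m in h_n depends only on d = n - m, through a sequence
   h(d) satisfying h(d+1) = alpha h(d) except for two boundary terms at d = -1, 0. Rows i > 0 then
   give A Q_n = Q_(n+1) + Q_(n-1) (n >= 1) directly, and in row 0 the boundary terms cancel the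
   extra Toeplitz entries. Hence P_0 = I, P_1 = A, and P_(n+1) - A P_n lies in the span of
   P_0, ..., P_n, so the P_k span the same Krylov spaces as the powers of A. The
   Toeplitz-plus-Hankel form of sum a_k P_k just collects the Toeplitz parts into a(z). *)

context module
begin

lemma module_hom_image_span_atMost_subset:
  assumes f: "module_hom scale scale f"
    and step: "\<And>k. k \<le> n \<Longrightarrow> f (V k) \<in> span (V ` {..Suc n})"
  shows "f ` span (V ` {..n}) \<subseteq> span (V ` {..Suc n})"
proof -
  have "f ` span (V ` {..n}) = span (f ` V ` {..n})"
    using module_hom.span_image[OF f] by simp
  also have "\<dots> \<subseteq> span (V ` {..Suc n})"
    using step by (intro span_minimal) auto
  finally show ?thesis .
qed

lemma span_atMost_Suc_mono: "span (V ` {..n}) \<subseteq> span (V ` {..Suc n})"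
  by (intro span_mono image_mono) auto

lemma span_eq_Krylov_span:
  assumes f: "module_hom scale scale f"
    and V0: "V 0 = x"
    and V_Suc: "\<And>n. f (V n) - V (Suc n) \<in> span (V ` {..n})"
  shows "span (V ` {..n}) = span ((\<lambda>k. (f ^^ k) x) ` {..n})"
proof (induction n)
  case 0
  show ?case by (simp add: V0)
next
  case (Suc n)
  define K where "K = (\<lambda>k. (f ^^ k) x)"
  have IH: "span (V ` {..n}) = span (K ` {..n})"
    using Suc.IH by (simp add: K_def)
  have f_K: "f ` span (K ` {..n}) \<subseteq> span (K ` {..Suc n})"
  proof (rule module_hom_image_span_atMost_subset[OF f])
    fix k assume "k \<le> n"
    then have "K (Suc k) \<in> K ` {..Suc n}" by blast
    then show "f (K k) \<in> span (K ` {..Suc n})"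
      by (auto simp: K_def intro: span_base)
  qed
  have f_V: "f ` span (V ` {..n}) \<subseteq> span (V ` {..Suc n})"
  proof (rule module_hom_image_span_atMost_subset[OF f])
    fix k assume "k \<le> n"
    have "f (V k) = (f (V k) - V (Suc k)) + V (Suc k)" by simp
    moreover have "span (V ` {..k}) \<subseteq> span (V ` {..Suc n})"
      using \<open>k \<le> n\<close> by (intro span_mono image_mono) auto
    ultimately show "f (V k) \<in> span (V ` {..Suc n})"
      using V_Suc[of k] \<open>k \<le> n\<close> by (metis span_add span_base subsetD atMost_iff Suc_le_mono imageI)
  qed
  have "V ` {..Suc n} \<subseteq> span (K ` {..Suc n})"
  proof -
    have "V (Suc n) = f (V n) - (f (V n) - V (Suc n))" by simp
    moreover have "f (V n) \<in> span (K ` {..Suc n})"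
      using f_K IH by (auto intro: span_base)
    ultimately have "V (Suc n) \<in> span (K ` {..Suc n})"
      using V_Suc[of n] IH span_atMost_Suc_mono[of K n] by (metis span_diff subsetD)
    moreover have "V ` {..n} \<subseteq> span (K ` {..Suc n})"
      using span_superset[of "V ` {..n}"] IH span_atMost_Suc_mono[of K n] by simp
    ultimately show ?thesis by (simp add: atMost_Suc)
  qed
  moreover have "K ` {..Suc n} \<subseteq> span (V ` {..Suc n})"
  proof -
    have "K (Suc n) \<in> f ` span (V ` {..n})"
      using IH by (auto simp: K_def intro: span_base)
    then have "K (Suc n) \<in> span (V ` {..Suc n})"
      using f_V by blast
    moreover have "K ` {..n} \<subseteq> span (V ` {..Suc n})"
      using span_superset[of "K ` {..n}"] IH span_atMost_Suc_mono[of V n] by simp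
    ultimately show ?thesis by (simp add: atMost_Suc)
  qed
  ultimately show ?case
    unfolding K_def span_eq by simp
qed

end

definition mscale :: "complex \<Rightarrow> cmat \<Rightarrow> cmat" where
  "mscale c M = (\<lambda>i j. c * M i j)"

lemma module_mscale: "module mscale"
  by unfold_locales (auto simp: mscale_def algebra_simps fun_eq_iff)

interpretation cmat: module mscale
  by (rule module_mscale)

lemma madd_eq_plus: "madd A B = A + B"
  by (simp add: madd_def fun_eq_iff)

lemma sum_cmat_apply: "(\<Sum>k\<in>K. M k) i j = (\<Sum>k\<in>K. M k i j :: complex)"
  by (induction K rule: infinite_finite_induct) auto

lemma subspace_span_fam: "cmat.subspace (span_fam V n)"
proof (unfold cmat.subspace_def, intro conjI ballI allI)
  show "0 \<in> span_fam V n"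
    unfolding span_fam_def by (rule CollectI, rule exI[of _ "\<lambda>_. 0"]) (simp add: fun_eq_iff)
next
  fix M N assume "M \<in> span_fam V n" "N \<in> span_fam V n"
  then obtain c d where "M = (\<lambda>i j. \<Sum>k\<le>n. c k * V k i j)" "N = (\<lambda>i j. \<Sum>k\<le>n. d k * V k i j)"
    by (auto simp: span_fam_def)
  then show "M + N \<in> span_fam V n"
    unfolding span_fam_def
    by (intro CollectI exI[of _ "\<lambda>k. c k + d k"]) (simp add: fun_eq_iff sum.distrib distrib_right)
next
  fix a M assume "M \<in> span_fam V n"
  then obtain c where "M = (\<lambda>i j. \<Sum>k\<le>n. c k * V k i j)"
    by (auto simp: span_fam_def)
  then show "mscale a M \<in> span_fam V n"
    unfolding span_fam_def mscale_def
    by (intro CollectI exI[of _ "\<lambda>k. a * c k"]) (simp add: fun_eq_iff sum_distrib_left mult.assoc)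
qed

lemma span_fam_eq_span: "span_fam V n = cmat.span (V ` {..n})"
proof
  show "span_fam V n \<subseteq> cmat.span (V ` {..n})"
  proof
    fix M assume "M \<in> span_fam V n"
    then obtain c where "M = (\<lambda>i j. \<Sum>k\<le>n. c k * V k i j)"
      by (auto simp: span_fam_def)
    then have "M = (\<Sum>k\<le>n. mscale (c k) (V k))"
      by (simp add: fun_eq_iff sum_cmat_apply mscale_def)
    also have "\<dots> \<in> cmat.span (V ` {..n})"
      by (intro cmat.span_sum cmat.span_scale cmat.span_base) simp
    finally show "M \<in> cmat.span (V ` {..n})" .
  qed
  have "V k \<in> span_fam V n" if "k \<le> n" for k
  proof -
    have "{..n} \<inter> {l. l = k} = {k}"
      using that by auto
    then show ?thesis
      unfolding span_fam_def
      by (intro CollectI exI[of _ "\<lambda>l. of_bool (l = k)"]) (simp add: fun_eq_iff)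
  qed
  then show "cmat.span (V ` {..n}) \<subseteq> span_fam V n"
    by (intro cmat.span_minimal subspace_span_fam) auto
qed

(* For i = 0 the truncated subtraction gives i - 1 = 0, so the corner entry alpha fits the
   pattern of the other rows. *)
lemma A_mat_entry:
  "A_mat \<alpha> i k = (if k = i - 1 then (if i = 0 then \<alpha> else 1) else 0) + (if k = Suc i then 1 else 0)"
  by (auto simp: A_mat_def madd_def toeplitz_def zsym_def)

lemma mmul_A_mat:
  "mmul (A_mat \<alpha>) B = (\<lambda>i j. (if i = 0 then \<alpha> else 1) * B (i - 1) j + B (Suc i) j)"
proof (intro ext)
  fix i j
  have "(\<lambda>k. A_mat \<alpha> i k * B k j)
      = (\<lambda>k. (if k = i - 1 then (if i = 0 then \<alpha> else 1) * B k j else 0) + (if k = Suc i then B k j else 0))"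
    by (auto simp: A_mat_entry fun_eq_iff distrib_right)
  also have "\<dots> sums ((if i = 0 then \<alpha> else 1) * B (i - 1) j + B (Suc i) j)"
    by (intro sums_add sums_single)
  finally show "mmul (A_mat \<alpha>) B i j = (if i = 0 then \<alpha> else 1) * B (i - 1) j + B (Suc i) j"
    unfolding mmul_def by (rule sums_unique[symmetric])
qed

lemma module_hom_mmul_A_mat: "module_hom mscale mscale (mmul (A_mat \<alpha>))"
  by (simp add: module_hom_iff module_mscale mmul_A_mat mscale_def fun_eq_iff algebra_simps)

lemma mpow_eq_funpow: "mpow A k = (mmul A ^^ k) idm"
  by (induction k) simp_all

definition h_tail :: "complex \<Rightarrow> int \<Rightarrow> complex" where
  "h_tail \<alpha> d = (if d < 0 then 0 else if d = 0 then \<alpha> else (\<alpha>\<^sup>2 - 1) * \<alpha> ^ nat (d - 1))"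

lemma h_coef_eq_h_tail: "1 \<le> m \<Longrightarrow> h_coef n \<alpha> m = h_tail \<alpha> (int n - int m)"
  by (auto simp: h_coef_def h_tail_def nat_diff_distrib)

lemma h_tail_plus_1:
  "h_tail \<alpha> (d + 1) = \<alpha> * h_tail \<alpha> d + (if d = -1 then \<alpha> else 0) - (if d = 0 then 1 else 0)"
proof (cases "d > 0")
  case True
  then have "nat d = Suc (nat (d - 1))"
    by simp
  with True show ?thesis
    by (simp add: h_tail_def power2_eq_square algebra_simps)
qed (auto simp: h_tail_def power2_eq_square)

(* P_n extended to n = 0 by the same formula; this gives 2I instead of I at n = 0 but makes the
   three-term recurrence hold uniformly for n >= 1. *)
definition sym_toeplitz_hankel :: "nat \<Rightarrow> complex \<Rightarrow> cmat" where
  "sym_toeplitz_hankel n \<alpha> = toeplitz (zsym n) + H_mat n \<alpha>"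

lemma sym_toeplitz_hankel_entry:
  "sym_toeplitz_hankel n \<alpha> i j = zsym n (int j - int i) + h_tail \<alpha> (int n - int i - int j - 1)"
  by (simp add: sym_toeplitz_hankel_def toeplitz_def H_mat_def hankel_def h_coef_eq_h_tail algebra_simps)

lemma P_mat_eq_sym_toeplitz_hankel: "0 < n \<Longrightarrow> P_mat n \<alpha> = sym_toeplitz_hankel n \<alpha>"
  by (simp add: P_mat_def sym_toeplitz_hankel_def madd_eq_plus)

lemma sym_toeplitz_hankel_0: "sym_toeplitz_hankel 0 \<alpha> = mscale 2 idm"
  by (auto simp: fun_eq_iff sym_toeplitz_hankel_entry zsym_def h_tail_def mscale_def idm_def)

lemma zsym_plus_minus_1:
  "0 < n \<Longrightarrow> zsym n (d + 1) + zsym n (d - 1) = zsym (Suc n) d + zsym (n - 1) d"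
  by (auto simp: zsym_def)

lemma mmul_A_mat_sym_toeplitz_hankel:
  assumes "0 < n"
  shows "mmul (A_mat \<alpha>) (sym_toeplitz_hankel n \<alpha>)
    = sym_toeplitz_hankel (Suc n) \<alpha> + sym_toeplitz_hankel (n - 1) \<alpha>"
proof (intro ext)
  fix i j
  let ?d = "int n - int j - 1"
  show "mmul (A_mat \<alpha>) (sym_toeplitz_hankel n \<alpha>) i j
    = (sym_toeplitz_hankel (Suc n) \<alpha> + sym_toeplitz_hankel (n - 1) \<alpha>) i j"
  proof (cases i)
    case 0
    have "h_tail \<alpha> (?d + 1) = \<alpha> * h_tail \<alpha> ?d + (if ?d = -1 then \<alpha> else 0) - (if ?d = 0 then 1 else 0)"
      by (rule h_tail_plus_1)
    moreover have "zsym n (int j + 1) + zsym n (int j - 1) = zsym (Suc n) (int j) + zsym (n - 1) (int j)"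
      using assms by (rule zsym_plus_minus_1)
    ultimately show ?thesis
      using assms 0 by (auto simp: mmul_A_mat sym_toeplitz_hankel_entry zsym_def algebra_simps)
  next
    case (Suc k)
    have "zsym n (int j - int k) + zsym n (int j - int k - 2)
      = zsym (Suc n) (int j - int k - 1) + zsym (n - 1) (int j - int k - 1)"
      using zsym_plus_minus_1[OF assms, of "int j - int k - 1"] by (simp add: algebra_simps)
    then show ?thesis
      using assms Suc by (simp add: mmul_A_mat sym_toeplitz_hankel_entry algebra_simps)
  qed
qed

lemma P_mat_0 [simp]: "P_mat 0 \<alpha> = idm"
  by (simp add: P_mat_def)

lemma A_mat_eq_P_mat_1: "A_mat \<alpha> = P_mat 1 \<alpha>"
  by (simp add: A_mat_def P_mat_def H_mat_def hankel_def h_coef_def madd_def fun_eq_iff)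

lemma mmul_A_mat_P_mat:
  "mmul (A_mat \<alpha>) (P_mat n \<alpha>)
    = P_mat (Suc n) \<alpha> + (if n = 0 then 0 else if n = 1 then mscale 2 idm else P_mat (n - 1) \<alpha>)"
proof (cases n)
  case 0
  have "mmul (A_mat \<alpha>) idm = A_mat \<alpha>"
    by (auto simp: fun_eq_iff mmul_A_mat A_mat_entry idm_def)
  with 0 show ?thesis
    by (simp add: A_mat_eq_P_mat_1)
next
  case (Suc m)
  have "P_mat n \<alpha> = sym_toeplitz_hankel n \<alpha>" "P_mat (Suc n) \<alpha> = sym_toeplitz_hankel (Suc n) \<alpha>"
    using Suc by (simp_all add: P_mat_eq_sym_toeplitz_hankel)
  moreover have "sym_toeplitz_hankel (n - 1) \<alpha> = (if n = 1 then mscale 2 idm else P_mat (n - 1) \<alpha>)"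
    using Suc by (simp add: sym_toeplitz_hankel_0 P_mat_eq_sym_toeplitz_hankel)
  ultimately show ?thesis
    using Suc mmul_A_mat_sym_toeplitz_hankel[of n \<alpha>] by simp
qed

lemma span_P_mat_eq_span_mpow_A_mat:
  "cmat.span ((\<lambda>k. P_mat k \<alpha>) ` {..n}) = cmat.span ((\<lambda>k. mpow (A_mat \<alpha>) k) ` {..n})"
  unfolding mpow_eq_funpow
proof (rule cmat.span_eq_Krylov_span[OF module_hom_mmul_A_mat])
  show "P_mat 0 \<alpha> = idm"
    by simp
next
  fix n
  let ?S = "cmat.span ((\<lambda>k. P_mat k \<alpha>) ` {..n})"
  have "idm \<in> ?S"
    by (rule cmat.span_base, rule image_eqI[of _ _ 0]) simp_all
  then have "0 \<in> ?S" "mscale 2 idm \<in> ?S" "P_mat (n - 1) \<alpha> \<in> ?S"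
    by (simp_all add: cmat.span_zero cmat.span_scale cmat.span_base)
  then show "mmul (A_mat \<alpha>) (P_mat n \<alpha>) - P_mat (Suc n) \<alpha> \<in> ?S"
    unfolding mmul_A_mat_P_mat add_diff_cancel_left' by (simp only: split: if_split) blast
qed

lemma sym_symbol_eq_sum_zsym:
  "sym_symbol n c d = c 0 * of_bool (d = 0) + (\<Sum>k\<in>{1..n}. c k * zsym k d)"
proof -
  have "(\<Sum>k\<in>{1..n}. c k * zsym k d) = (\<Sum>k\<in>{1..n}. if k = nat \<bar>d\<bar> then c k else 0)"
    by (intro sum.cong) (auto simp: zsym_def)
  then show ?thesis
    by (auto simp: sym_symbol_def)
qed

lemma sum_P_mat_eq_toeplitz_plus_hankel:
  "(\<lambda>i j. \<Sum>k\<le>n. c k * P_mat k \<alpha> i j)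
    = madd (toeplitz (sym_symbol n c)) (\<lambda>i j. \<Sum>k\<in>{1..n}. c k * H_mat k \<alpha> i j)"
proof (intro ext)
  fix i j
  have "{..n} = insert 0 {1..n}"
    by auto
  then have "(\<Sum>k\<le>n. c k * P_mat k \<alpha> i j)
      = c 0 * idm i j + (\<Sum>k\<in>{1..n}. c k * zsym k (int j - int i) + c k * H_mat k \<alpha> i j)"
    by (simp add: P_mat_def madd_def toeplitz_def distrib_left)
  then show "(\<Sum>k\<le>n. c k * P_mat k \<alpha> i j)
      = madd (toeplitz (sym_symbol n c)) (\<lambda>i j. \<Sum>k\<in>{1..n}. c k * H_mat k \<alpha> i j) i j"
    by (simp add: madd_def toeplitz_def sym_symbol_eq_sum_zsym idm_def sum.distrib)
qed

theorem corollary5: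
  fixes \<alpha> :: complex and n :: nat
  shows "span_fam (\<lambda>k. P_mat k \<alpha>) n = span_fam (\<lambda>k. mpow (A_mat \<alpha>) k) n
    \<and> (\<forall>c :: nat \<Rightarrow> complex.
         (\<lambda>i j. \<Sum>k\<le>n. c k * P_mat k \<alpha> i j)
         = madd (toeplitz (sym_symbol n c)) (\<lambda>i j. \<Sum>k\<in>{1..n}. c k * H_mat k \<alpha> i j))
    \<and> (\<forall>M \<in> span_fam (\<lambda>k. mpow (A_mat \<alpha>) k) n. \<exists>c :: nat \<Rightarrow> complex.
         M = madd (toeplitz (sym_symbol n c)) (\<lambda>i j. \<Sum>k\<in>{1..n}. c k * H_mat k \<alpha> i j))"
proof -
  have spans_eq: "span_fam (\<lambda>k. P_mat k \<alpha>) n = span_fam (\<lambda>k. mpow (A_mat \<alpha>) k) n"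
    unfolding span_fam_eq_span by (rule span_P_mat_eq_span_mpow_A_mat)
  have decomposition: "\<forall>M \<in> span_fam (\<lambda>k. mpow (A_mat \<alpha>) k) n. \<exists>c.
      M = madd (toeplitz (sym_symbol n c)) (\<lambda>i j. \<Sum>k\<in>{1..n}. c k * H_mat k \<alpha> i j)"
  proof
    fix M assume "M \<in> span_fam (\<lambda>k. mpow (A_mat \<alpha>) k) n"
    then obtain c where "M = (\<lambda>i j. \<Sum>k\<le>n. c k * P_mat k \<alpha> i j)"
      unfolding spans_eq[symmetric] by (auto simp: span_fam_def)
    then have "M = madd (toeplitz (sym_symbol n c)) (\<lambda>i j. \<Sum>k\<in>{1..n}. c k * H_mat k \<alpha> i j)"
      by (simp only: sum_P_mat_eq_toeplitz_plus_hankel)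
    then show "\<exists>c. M = madd (toeplitz (sym_symbol n c)) (\<lambda>i j. \<Sum>k\<in>{1..n}. c k * H_mat k \<alpha> i j)"
      by (rule exI[of _ c])
  qed
  show ?thesis
    by (intro conjI allI spans_eq sum_P_mat_eq_toeplitz_plus_hankel decomposition)
qed

end
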